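(* Let $\mathbf{Dt},\mathbf{Da}$ be types with $\mathrm{op}:\mathrm{opsym}\to(\mathrm{index},\mathbf{Dt})\mathrm{input}\to(\mathrm{bindex},\mathbf{Da})\mathrm{input}\to\mathbf{Dt}$ and $\mathrm{abs}:\mathrm{varsort}\to(\mathbf{Dt}\to\mathbf{Dt})\to\mathbf{Da}$, and let $\mathbf{val}=\mathrm{varsort}\to\mathrm{var}\to\mathbf{Dt}$. There exist $\mathrm{sem}:\mathrm{term}\to\mathbf{val}\to\mathbf{Dt}$ and $\mathrm{semAbs}:\mathrm{abs}\to\mathbf{val}\to\mathbf{Da}$ such that for all $\rho:\mathbf{val}$, all good terms $X,Y$, and all $inp,binp$ with good values and domains of cardinality $<|\mathrm{var}|$: (i) $\mathrm{sem}(\mathrm{Var}\;xs\;x)\,\rho=\rho\;xs\;x$; (ii) $\mathrm{sem}(\mathrm{Op}\;\delta\;inp\;binp)\,\rho=\mathrm{op}\;\delta\;(\uparrow(\lambda X.\,\mathrm{sem}\;X\;\rho)\;inp)\;(\uparrow(\lambda A.\,\mathrm{semAbs}\;A\;\rho)\;binp)$; (iii) $\mathrm{semAbs}(\mathrm{Abs}\;xs\;x\;X)\,\rho=\mathrm{abs}\;xs\;(\lambda d.\,\mathrm{sem}\;X\;(\rho[(xs,x)\leftarrow d]))$; (iv) $\mathrm{sem}(X[Y/y]_{ys})\,\rho=\mathrm{sem}\;X\;(\rho[(ys,y)\leftarrow\mathrm{sem}\;Y\;\rho])$; (v) if $\mathrm{fresh}\;xs\;x\;X$ then for all $\rho,\rho'$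 that agree everywhere except possibly at $(xs,x)$, $\mathrm{sem}\;X\;\rho=\mathrm{sem}\;X\;\rho'$.
   Context: Fix types $\mathrm{var}$, $\mathrm{varsort}$, $\mathrm{index}$, $\mathrm{bindex}$, $\mathrm{opsym}$, with $|\mathrm{var}|$ an infinite regular cardinal. $(\alpha,\beta)\,\mathrm{input}$ = partial functions $\alpha\to\beta\;\mathrm{option}$; $\uparrow g\;inp$ applies $g$ to all defined values of $inp$. Terms ($\mathrm{term}$) and abstractions ($\mathrm{abs}$) are alpha-equivalence classes of the free datatypes $\mathrm{qterm}=\mathrm{qVar}\;\mathrm{varsort}\;\mathrm{var}\mid\mathrm{qOp}\;\mathrm{opsym}\;((\mathrm{index},\mathrm{qterm})\mathrm{input})\;((\mathrm{bindex},\mathrm{qabs})\mathrm{input})$, $\mathrm{qabs}=\mathrm{qAbs}\;\mathrm{varsort}\;\mathrm{var}\;\mathrm{qterm}$ ($x$ of varsort $xs$ bound in $X$ in $\mathrm{qAbs}\;xs\;x\;X$), with lifted constructors $\mathrm{Var},\mathrm{Op},\mathrm{Abs}$; $\mathrm{fresh}\;xs\;x\;X$: the variable $x$ of varsort $xs$ does not occur free in $X$; $X[Y/y]_{ys}$: capture-avoiding substitution of $Y$ for free occurrences of the variable $y$ of varsort $ys$. Good: every $\mathrm{Op}$ node has inputs with domains of cardinality $<|\mathrm{var}|$. $\rho[(xs,x)\leftarrow d]$ is the valuation equal to $\rho$ except that it maps $xs,x$ to $d$. *)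

theory Defs
  imports Main
begin

unbundle cardinal_syntax

type_synonym ('a,'b) input = "'a \<Rightarrow> 'b option"

datatype ('index,'bindex,'varsort,'var,'opsym) qterm =
    qVar 'varsort 'var
  | qOp 'opsym "('index, ('index,'bindex,'varsort,'var,'opsym) qterm) input"
               "('bindex, ('index,'bindex,'varsort,'var,'opsym) qabs) input"
and ('index,'bindex,'varsort,'var,'opsym) qabs =
    qAbs 'varsort 'var "('index,'bindex,'varsort,'var,'opsym) qterm"

definition lift :: "('b \<Rightarrow> 'c) \<Rightarrow> ('a,'b) input \<Rightarrow> ('a,'c) input" where
  "lift g inp = map_option g \<circ> inp"

definition idom :: "('a,'b) input \<Rightarrow> 'a set" where
  "idom inp = {i. inp i \<noteq> None}"

definition sw :: "'varsort \<Rightarrow> 'var \<Rightarrow> 'var \<Rightarrow> 'varsort \<Rightarrow> 'var \<Rightarrow> 'var" where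
  "sw xs x y zs z = (if zs = xs then (if z = x then y else if z = y then x else z) else z)"

primrec qSwap :: "'varsort \<Rightarrow> 'var \<Rightarrow> 'var \<Rightarrow> ('index,'bindex,'varsort,'var,'opsym) qterm \<Rightarrow> ('index,'bindex,'varsort,'var,'opsym) qterm"
and qSwapAbs :: "'varsort \<Rightarrow> 'var \<Rightarrow> 'var \<Rightarrow> ('index,'bindex,'varsort,'var,'opsym) qabs \<Rightarrow> ('index,'bindex,'varsort,'var,'opsym) qabs" where
  "qSwap xs x y (qVar zs z) = qVar zs (sw xs x y zs z)"
| "qSwap xs x y (qOp \<delta> inp binp) = qOp \<delta> (map_option (qSwap xs x y) \<circ> inp) (map_option (qSwapAbs xs x y) \<circ> binp)"
| "qSwapAbs xs x y (qAbs zs z X) = qAbs zs (sw xs x y zs z) (qSwap xs x y X)"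

primrec qFresh :: "'varsort \<Rightarrow> 'var \<Rightarrow> ('index,'bindex,'varsort,'var,'opsym) qterm \<Rightarrow> bool"
and qFreshAbs :: "'varsort \<Rightarrow> 'var \<Rightarrow> ('index,'bindex,'varsort,'var,'opsym) qabs \<Rightarrow> bool" where
  "qFresh xs x (qVar ys y) = (\<not> (ys = xs \<and> y = x))"
| "qFresh xs x (qOp \<delta> inp binp) =
     ((\<forall>i. (map_option (qFresh xs x) \<circ> inp) i \<noteq> Some False) \<and>
      (\<forall>i. (map_option (qFreshAbs xs x) \<circ> binp) i \<noteq> Some False))"
| "qFreshAbs xs x (qAbs ys y X) = ((ys = xs \<and> y = x) \<or> qFresh xs x X)"

primrec qGood :: "('index,'bindex,'varsort,'var,'opsym) qterm \<Rightarrow> bool"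
and qGoodAbs :: "('index,'bindex,'varsort,'var,'opsym) qabs \<Rightarrow> bool" where
  "qGood (qVar ys y) = True"
| "qGood (qOp \<delta> inp binp) =
     ((\<forall>i. (map_option qGood \<circ> inp) i \<noteq> Some False) \<and>
      (\<forall>i. (map_option qGoodAbs \<circ> binp) i \<noteq> Some False) \<and>
      card_of (idom inp) <o card_of (UNIV :: 'var set) \<and> card_of (idom binp) <o card_of (UNIV :: 'var set))"
| "qGoodAbs (qAbs ys y X) = qGood X"

inductive alpha :: "('index,'bindex,'varsort,'var,'opsym) qterm \<Rightarrow> ('index,'bindex,'varsort,'var,'opsym) qterm \<Rightarrow> bool"
and alphaAbs :: "('index,'bindex,'varsort,'var,'opsym) qabs \<Rightarrow> ('index,'bindex,'varsort,'var,'opsym) qabs \<Rightarrow> bool" where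
  alpha_Var: "alpha (qVar xs x) (qVar xs x)"
| alpha_Op: "\<lbrakk>\<forall>i. rel_option alpha (inp i) (inp' i); \<forall>i. rel_option alphaAbs (binp i) (binp' i)\<rbrakk>
     \<Longrightarrow> alpha (qOp \<delta> inp binp) (qOp \<delta> inp' binp')"
| alpha_Abs: "\<lbrakk>y \<noteq> x; y \<noteq> x'; qFresh xs y X; qFresh xs y X';
     alpha (qSwap xs y x X) (qSwap xs y x' X')\<rbrakk>
     \<Longrightarrow> alphaAbs (qAbs xs x X) (qAbs xs x' X')"

definition pickFresh :: "('varsort \<Rightarrow> 'var \<Rightarrow> ('index,'bindex,'varsort,'var,'opsym) qterm) \<Rightarrow> 'varsort \<Rightarrow> 'var \<Rightarrow> ('index,'bindex,'varsort,'var,'opsym) qterm \<Rightarrow> 'var" where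
  "pickFresh \<rho> xs x X = (SOME z. qFreshAbs xs z (qAbs xs x X) \<and>
      (\<forall>ys y. \<not> qFreshAbs ys y (qAbs xs x X) \<longrightarrow> qFresh xs z (\<rho> ys y)))"

primrec qPsubst :: "('varsort \<Rightarrow> 'var \<Rightarrow> ('index,'bindex,'varsort,'var,'opsym) qterm) \<Rightarrow> ('index,'bindex,'varsort,'var,'opsym) qterm \<Rightarrow> ('index,'bindex,'varsort,'var,'opsym) qterm"
and qPsubstAbs :: "('varsort \<Rightarrow> 'var \<Rightarrow> ('index,'bindex,'varsort,'var,'opsym) qterm) \<Rightarrow> ('index,'bindex,'varsort,'var,'opsym) qabs \<Rightarrow> ('index,'bindex,'varsort,'var,'opsym) qabs" where
  "qPsubst \<rho> (qVar ys y) = \<rho> ys y"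
| "qPsubst \<rho> (qOp \<delta> inp binp) = qOp \<delta> (map_option (qPsubst \<rho>) \<circ> inp) (map_option (qPsubstAbs \<rho>) \<circ> binp)"
| "qPsubstAbs \<rho> (qAbs xs x X) =
     (let z = pickFresh \<rho> xs x X in qAbs xs z (qPsubst (\<rho>(xs := (\<rho> xs)(x := qVar xs z))) X))"

text \<open>We quotient by the equivalence closure of alpha (alpha itself is an equivalence
  on good quasi-terms).\<close>
quotient_type ('index,'bindex,'varsort,'var,'opsym) trm =
  "('index,'bindex,'varsort,'var,'opsym) qterm" / "equivclp alpha"
  by simp

quotient_type ('index,'bindex,'varsort,'var,'opsym) tabs =
  "('index,'bindex,'varsort,'var,'opsym) qabs" / "equivclp alphaAbs"
  by simp

definition Var :: "'varsort \<Rightarrow> 'var \<Rightarrow> ('index,'bindex,'varsort,'var,'opsym) trm" where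
  "Var xs x = abs_trm (qVar xs x)"

definition Op :: "'opsym \<Rightarrow> ('index, ('index,'bindex,'varsort,'var,'opsym) trm) input
   \<Rightarrow> ('bindex, ('index,'bindex,'varsort,'var,'opsym) tabs) input \<Rightarrow> ('index,'bindex,'varsort,'var,'opsym) trm" where
  "Op \<delta> inp binp = abs_trm (qOp \<delta> (lift rep_trm inp) (lift rep_tabs binp))"

definition Abs :: "'varsort \<Rightarrow> 'var \<Rightarrow> ('index,'bindex,'varsort,'var,'opsym) trm \<Rightarrow> ('index,'bindex,'varsort,'var,'opsym) tabs" where
  "Abs xs x X = abs_tabs (qAbs xs x (rep_trm X))"

definition good :: "('index,'bindex,'varsort,'var,'opsym) trm \<Rightarrow> bool" where
  "good X = qGood (rep_trm X)"

definition goodAbs :: "('index,'bindex,'varsort,'var,'opsym) tabs \<Rightarrow> bool" where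
  "goodAbs A = qGoodAbs (rep_tabs A)"

definition fresh :: "'varsort \<Rightarrow> 'var \<Rightarrow> ('index,'bindex,'varsort,'var,'opsym) trm \<Rightarrow> bool" where
  "fresh xs x X = qFresh xs x (rep_trm X)"

text \<open>subst X Y y ys  =  X[Y/y]_ys\<close>
definition subst :: "('index,'bindex,'varsort,'var,'opsym) trm \<Rightarrow> ('index,'bindex,'varsort,'var,'opsym) trm
   \<Rightarrow> 'var \<Rightarrow> 'varsort \<Rightarrow> ('index,'bindex,'varsort,'var,'opsym) trm" where
  "subst X Y y ys = abs_trm (qPsubst (\<lambda>zs z. if zs = ys \<and> z = y then rep_trm Y else qVar zs z) (rep_trm X))"

definition goodInp :: "('index, ('index,'bindex,'varsort,'var,'opsym) trm) input \<Rightarrow> bool" where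
  "goodInp inp = ((\<forall>i X. inp i = Some X \<longrightarrow> good X) \<and> card_of (idom inp) <o card_of (UNIV :: 'var set))"

definition goodBinp :: "('bindex, ('index,'bindex,'varsort,'var,'opsym) tabs) input \<Rightarrow> bool" where
  "goodBinp binp = ((\<forall>i A. binp i = Some A \<longrightarrow> goodAbs A) \<and> card_of (idom binp) <o card_of (UNIV :: 'var set))"

definition updVal :: "('varsort \<Rightarrow> 'var \<Rightarrow> 'd) \<Rightarrow> 'varsort \<Rightarrow> 'var \<Rightarrow> 'd \<Rightarrow> ('varsort \<Rightarrow> 'var \<Rightarrow> 'd)" where
  "updVal \<rho> xs x d = (\<lambda>ys y. if ys = xs \<and> y = x then d else \<rho> ys y)"

end

theory Submission
  imports Defs
begin

text \<open>The semantics is defined by structural recursion on quasi-terms. It depends only on the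
free variables, and the semantics of a swapped quasi-term is the original semantics under the
swapped valuation; together these make it invariant under alpha-equivalence, so it descends to
terms. For the substitution law, capture-avoiding substitution renames each binder to a variable
fresh for all the substituted terms; such a variable exists because a good quasi-term has fewer
than |var| free variables and |var| is infinite and regular.\<close>

lemma card_of_ordLess_infinite_if_finite:
  assumes "finite A" and "infinite B"
  shows "|A| <o |B|"
  using assms by (intro finite_ordLess_infinite) (auto simp: Field_card_of card_of_well_order_on)

lemma ex_var_notin_small_set:
  fixes V :: "('s \<times> 'var) set"
  assumes "|V| <o |UNIV :: 'var set|"
  shows "\<exists>z. (xs, z) \<notin> V"
proof -
  have "|snd ` V| <o |UNIV :: 'var set|"
    using card_of_image assms by (rule ordLeq_ordLess_trans)
  then obtain z where "z \<notin> snd ` V"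
    using ordLess_irreflexive by (metis UNIV_eq_I)
  then show ?thesis by force
qed

lemma card_of_ran_ordLeq_idom: "|ran inp| \<le>o |idom inp|"
proof -
  have "ran inp = (the \<circ> inp) ` idom inp"
    by (force simp: ran_def idom_def)
  then show ?thesis by (metis card_of_image)
qed

lemma Some_in_range_if_in_ran: "X \<in> ran inp \<Longrightarrow> Some X \<in> range inp"
  by (auto simp: ran_def intro: range_eqI[OF sym])

lemma map_option_comp_eq_if_rel_option:
  assumes "\<And>i. rel_option (\<lambda>X Y. f X = g Y) (inp i) (inp' i)"
  shows "map_option f \<circ> inp = map_option g \<circ> inp'"
proof
  fix i
  have "rel_option (=) (map_option f (inp i)) (map_option g (inp' i))"
    using assms by (simp add: option.rel_map)
  then show "(map_option f \<circ> inp) i = (map_option g \<circ> inp') i"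
    by (simp add: option.rel_eq)
qed

lemma map_option_comp_cong:
  "(\<And>X. X \<in> ran inp \<Longrightarrow> f X = g X) \<Longrightarrow> map_option f \<circ> inp = map_option g \<circ> inp"
  by (force simp: fun_eq_iff ran_def intro: option.map_cong0)

lemma qGood_qOp_iff:
  "qGood (qOp \<delta> inp binp) \<longleftrightarrow>
     (\<forall>X\<in>ran inp. qGood X) \<and> (\<forall>A\<in>ran binp. qGoodAbs A) \<and>
     |idom inp| <o |UNIV :: 'var set| \<and> |idom binp| <o |UNIV :: 'var set|"
  for inp :: "('index, ('index,'bindex,'varsort,'var,'opsym) qterm) input"
  by (force simp: ran_def split: option.splits)

definition qFV :: "('index,'bindex,'varsort,'var,'opsym) qterm \<Rightarrow> ('varsort \<times> 'var) set" where
  "qFV X = {(ys, y). \<not> qFresh ys y X}"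

definition qFVAbs :: "('index,'bindex,'varsort,'var,'opsym) qabs \<Rightarrow> ('varsort \<times> 'var) set" where
  "qFVAbs A = {(ys, y). \<not> qFreshAbs ys y A}"

lemma qFV_qVar [simp]: "qFV (qVar xs x) = {(xs, x)}"
  by (auto simp: qFV_def)

lemma qFV_qOp [simp]:
  "qFV (qOp \<delta> inp binp) = (\<Union>X\<in>ran inp. qFV X) \<union> (\<Union>A\<in>ran binp. qFVAbs A)"
  by (force simp: qFV_def qFVAbs_def ran_def split: option.splits)

lemma qFVAbs_qAbs [simp]: "qFVAbs (qAbs xs x X) = qFV X - {(xs, x)}"
  by (auto simp: qFV_def qFVAbs_def)

lemma Cinfinite_card_of_UNIV: "infinite (UNIV :: 'a set) \<Longrightarrow> Cinfinite |UNIV :: 'a set|"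
  by (simp add: cinfinite_def Field_card_of card_of_Card_order card_of_card_order_on)

lemma qFV_qGood_ordLess:
  fixes X :: "('index,'bindex,'varsort,'var,'opsym) qterm"
    and A :: "('index,'bindex,'varsort,'var,'opsym) qabs"
  assumes inf: "infinite (UNIV :: 'var set)" and reg: "regularCard |UNIV :: 'var set|"
  shows "qGood X \<Longrightarrow> |qFV X| <o |UNIV :: 'var set|"
    and "qGoodAbs A \<Longrightarrow> |qFVAbs A| <o |UNIV :: 'var set|"
proof (induct X and A)
  case (qVar xs x)
  show ?case using inf by (simp add: card_of_ordLess_infinite_if_finite)
next
  case (qOp \<delta> inp binp)
  have Cinf: "Cinfinite |UNIV :: 'var set|"
    using inf by (rule Cinfinite_card_of_UNIV)
  have "|\<Union>X\<in>ran inp. qFV X| <o |UNIV :: 'var set|"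
  proof (rule regularCard_UNION_bound[OF Cinf reg])
    show "|ran inp| <o |UNIV :: 'var set|"
      using card_of_ran_ordLeq_idom qOp.prems by (force simp: qGood_qOp_iff intro: ordLeq_ordLess_trans)
    show "|qFV X| <o |UNIV :: 'var set|" if "X \<in> ran inp" for X
      using that qOp.prems by (intro qOp.hyps(1)) (auto simp: qGood_qOp_iff ran_def intro: range_eqI[OF sym])
  qed
  moreover have "|\<Union>A\<in>ran binp. qFVAbs A| <o |UNIV :: 'var set|"
  proof (rule regularCard_UNION_bound[OF Cinf reg])
    show "|ran binp| <o |UNIV :: 'var set|"
      using card_of_ran_ordLeq_idom qOp.prems by (force simp: qGood_qOp_iff intro: ordLeq_ordLess_trans)
    show "|qFVAbs A| <o |UNIV :: 'var set|" if "A \<in> ran binp" for A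
      using that qOp.prems by (intro qOp.hyps(2)) (auto simp: qGood_qOp_iff ran_def intro: range_eqI[OF sym])
  qed
  ultimately show ?case
    using inf by (simp add: card_of_Un_ordLess_infinite)
next
  case (qAbs xs x X)
  then show ?case
    using card_of_mono1[of "qFV X - {(xs, x)}" "qFV X"] ordLeq_ordLess_trans by fastforce
qed

lemma pickFresh_notin_qFV:
  fixes X :: "('index,'bindex,'varsort,'var,'opsym) qterm"
  assumes inf: "infinite (UNIV :: 'var set)" and reg: "regularCard |UNIV :: 'var set|"
    and "qGood X" and "\<And>ys y. qGood (\<sigma> ys y)"
    and "(ys, y) \<in> qFVAbs (qAbs xs x X)"
  shows "(xs, pickFresh \<sigma> xs x X) \<notin> qFV (\<sigma> ys y)"
proof -
  let ?F = "qFVAbs (qAbs xs x X)"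
  have Cinf: "Cinfinite |UNIV :: 'var set|"
    using inf by (rule Cinfinite_card_of_UNIV)
  have F: "|?F| <o |UNIV :: 'var set|"
    using assms(3) by (intro qFV_qGood_ordLess(2)[OF inf reg]) simp
  have "|\<Union>(ys, y)\<in>?F. qFV (\<sigma> ys y)| <o |UNIV :: 'var set|"
    by (intro regularCard_UNION_bound[OF Cinf reg F])
      (simp add: split_beta qFV_qGood_ordLess(1)[OF inf reg assms(4)])
  with F have "|?F \<union> (\<Union>(ys, y)\<in>?F. qFV (\<sigma> ys y))| <o |UNIV :: 'var set|"
    using inf by (simp add: card_of_Un_ordLess_infinite)
  then obtain z where "(xs, z) \<notin> ?F \<union> (\<Union>(ys, y)\<in>?F. qFV (\<sigma> ys y))"
    by (meson ex_var_notin_small_set)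
  then have "\<exists>z. qFreshAbs xs z (qAbs xs x X) \<and>
      (\<forall>ys y. \<not> qFreshAbs ys y (qAbs xs x X) \<longrightarrow> qFresh xs z (\<sigma> ys y))"
    unfolding qFV_def qFVAbs_def by blast
  then have "\<forall>ys y. \<not> qFreshAbs ys y (qAbs xs x X) \<longrightarrow> qFresh xs (pickFresh \<sigma> xs x X) (\<sigma> ys y)"
    unfolding pickFresh_def by (rule someI2_ex) blast
  then show ?thesis
    using assms(5) unfolding qFV_def qFVAbs_def by blast
qed

lemma sw_eq_sw_iff: "sw xs x y zs z = sw xs x y zs z' \<longleftrightarrow> z = z'"
  by (auto simp: sw_def)

lemma equivclp_invariant:
  assumes "equivclp r a b" and "\<And>x y. r x y \<Longrightarrow> f x = f y"
  shows "f a = f b"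
  using assms by (induct rule: equivclp_induct) auto

context
  fixes op :: "'opsym \<Rightarrow> ('index, 'Dt) input \<Rightarrow> ('bindex, 'Da) input \<Rightarrow> 'Dt"
    and ab :: "'varsort \<Rightarrow> ('Dt \<Rightarrow> 'Dt) \<Rightarrow> 'Da"
begin

primrec qsem :: "('index,'bindex,'varsort,'var,'opsym) qterm \<Rightarrow> ('varsort \<Rightarrow> 'var \<Rightarrow> 'Dt) \<Rightarrow> 'Dt"
  and qsemAbs :: "('index,'bindex,'varsort,'var,'opsym) qabs \<Rightarrow> ('varsort \<Rightarrow> 'var \<Rightarrow> 'Dt) \<Rightarrow> 'Da"
where
  "qsem (qVar xs x) \<rho> = \<rho> xs x"
| "qsem (qOp \<delta> inp binp) \<rho> =
     op \<delta> (map_option (\<lambda>X. qsem X \<rho>) \<circ> inp) (map_option (\<lambda>A. qsemAbs A \<rho>) \<circ> binp)"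
| "qsemAbs (qAbs xs x X) \<rho> = ab xs (\<lambda>d. qsem X (updVal \<rho> xs x d))"

lemma qsem_cong:
  fixes X :: "('index,'bindex,'varsort,'var,'opsym) qterm"
    and A :: "('index,'bindex,'varsort,'var,'opsym) qabs"
  shows "(\<And>ys y. (ys, y) \<in> qFV X \<Longrightarrow> \<rho> ys y = \<rho>' ys y) \<Longrightarrow> qsem X \<rho> = qsem X \<rho>'"
    and "(\<And>ys y. (ys, y) \<in> qFVAbs A \<Longrightarrow> \<rho> ys y = \<rho>' ys y) \<Longrightarrow> qsemAbs A \<rho> = qsemAbs A \<rho>'"
proof (induct X and A arbitrary: \<rho> \<rho>' and \<rho> \<rho>')
  case (qOp \<delta> inp binp)
  have "map_option (\<lambda>X. qsem X \<rho>) \<circ> inp = map_option (\<lambda>X. qsem X \<rho>') \<circ> inp"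
  proof (rule map_option_comp_cong, rule qOp.hyps(1))
    fix X assume X: "X \<in> ran inp"
    then show "Some X \<in> range inp" by (rule Some_in_range_if_in_ran)
    show "\<rho> ys y = \<rho>' ys y" if "(ys, y) \<in> qFV X" for ys y
      using X that by (intro qOp.prems) auto
  qed simp
  moreover have "map_option (\<lambda>A. qsemAbs A \<rho>) \<circ> binp = map_option (\<lambda>A. qsemAbs A \<rho>') \<circ> binp"
  proof (rule map_option_comp_cong, rule qOp.hyps(2))
    fix A assume A: "A \<in> ran binp"
    then show "Some A \<in> range binp" by (rule Some_in_range_if_in_ran)
    show "\<rho> ys y = \<rho>' ys y" if "(ys, y) \<in> qFVAbs A" for ys y
      using A that by (intro qOp.prems) auto
  qed simp
  ultimately show ?case by simp
next
  case (qAbs xs x X)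
  have "qsem X (updVal \<rho> xs x d) = qsem X (updVal \<rho>' xs x d)" for d
    using qAbs.prems by (intro qAbs.hyps) (auto simp: updVal_def)
  then show ?case by simp
qed simp

lemma qsem_qSwap:
  fixes X :: "('index,'bindex,'varsort,'var,'opsym) qterm"
    and A :: "('index,'bindex,'varsort,'var,'opsym) qabs"
  shows "qsem (qSwap xs x y X) \<rho> = qsem X (\<lambda>zs z. \<rho> zs (sw xs x y zs z))"
    and "qsemAbs (qSwapAbs xs x y A) \<rho> = qsemAbs A (\<lambda>zs z. \<rho> zs (sw xs x y zs z))"
proof (induct X and A arbitrary: \<rho> and \<rho>)
  case (qOp \<delta> inp binp)
  have "map_option (\<lambda>X. qsem (qSwap xs x y X) \<rho>) \<circ> inp =
      map_option (\<lambda>X. qsem X (\<lambda>zs z. \<rho> zs (sw xs x y zs z))) \<circ> inp"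
    by (rule map_option_comp_cong, rule qOp.hyps(1)) (auto intro: Some_in_range_if_in_ran)
  moreover have "map_option (\<lambda>A. qsemAbs (qSwapAbs xs x y A) \<rho>) \<circ> binp =
      map_option (\<lambda>A. qsemAbs A (\<lambda>zs z. \<rho> zs (sw xs x y zs z))) \<circ> binp"
    by (rule map_option_comp_cong, rule qOp.hyps(2)) (auto intro: Some_in_range_if_in_ran)
  ultimately show ?case by (simp add: option.map_comp comp_def)
next
  case (qAbs zs z X)
  have "(\<lambda>ws w. updVal \<rho> zs (sw xs x y zs z) d ws (sw xs x y ws w)) =
      updVal (\<lambda>ws w. \<rho> ws (sw xs x y ws w)) zs z d" for d
    by (auto simp: fun_eq_iff updVal_def sw_eq_sw_iff)
  then show ?case by (simp add: qAbs.hyps)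
qed simp

lemma qsem_alpha:
  fixes X X' :: "('index,'bindex,'varsort,'var,'opsym) qterm"
    and A A' :: "('index,'bindex,'varsort,'var,'opsym) qabs"
  shows "alpha X X' \<Longrightarrow> qsem X = qsem X'"
    and "alphaAbs A A' \<Longrightarrow> qsemAbs A = qsemAbs A'"
proof (induct rule: alpha_alphaAbs.inducts)
  case (alpha_Op inp inp' binp binp' \<delta>)
  have "map_option (\<lambda>X. qsem X \<rho>) \<circ> inp = map_option (\<lambda>X. qsem X \<rho>) \<circ> inp'" for \<rho>
    by (intro map_option_comp_eq_if_rel_option option.rel_mono_strong[OF alpha_Op.hyps(1)[rule_format]]) auto
  moreover have "map_option (\<lambda>A. qsemAbs A \<rho>) \<circ> binp = map_option (\<lambda>A. qsemAbs A \<rho>) \<circ> binp'" for \<rho>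
    by (intro map_option_comp_eq_if_rel_option option.rel_mono_strong[OF alpha_Op.hyps(2)[rule_format]]) auto
  ultimately show ?case by (intro ext) (simp only: qsem.simps)
next
  case (alpha_Abs y x x' xs X X')
  have "qsem X (updVal \<rho> xs x d) = qsem X' (updVal \<rho> xs x' d)" for \<rho> d
  proof -
    have "qsem X (updVal \<rho> xs x d) = qsem X (\<lambda>zs z. updVal \<rho> xs y d zs (sw xs y x zs z))"
      using alpha_Abs.hyps(1,3) by (intro qsem_cong(1)) (auto simp: qFV_def updVal_def sw_def)
    also have "\<dots> = qsem X' (\<lambda>zs z. updVal \<rho> xs y d zs (sw xs y x' zs z))"
      using alpha_Abs.hyps(6) by (simp flip: qsem_qSwap(1))
    also have "\<dots> = qsem X' (updVal \<rho> xs x' d)"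
      using alpha_Abs.hyps(2,4) by (intro qsem_cong(1)) (auto simp: qFV_def updVal_def sw_def)
    finally show ?thesis .
  qed
  then show ?case by (simp add: fun_eq_iff)
qed simp

lemma qsem_qPsubst:
  fixes X :: "('index,'bindex,'varsort,'var,'opsym) qterm"
    and A :: "('index,'bindex,'varsort,'var,'opsym) qabs"
  assumes inf: "infinite (UNIV :: 'var set)" and reg: "regularCard |UNIV :: 'var set|"
  shows "qGood X \<Longrightarrow> (\<And>ys y. qGood (\<sigma> ys y)) \<Longrightarrow>
      qsem (qPsubst \<sigma> X) \<rho> = qsem X (\<lambda>ys y. qsem (\<sigma> ys y) \<rho>)"
    and "qGoodAbs A \<Longrightarrow> (\<And>ys y. qGood (\<sigma> ys y)) \<Longrightarrow>
      qsemAbs (qPsubstAbs \<sigma> A) \<rho> = qsemAbs A (\<lambda>ys y. qsem (\<sigma> ys y) \<rho>)"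
proof (induct X and A arbitrary: \<sigma> \<rho> and \<sigma> \<rho>)
  case (qOp \<delta> inp binp)
  have "map_option (\<lambda>X. qsem (qPsubst \<sigma> X) \<rho>) \<circ> inp =
      map_option (\<lambda>X. qsem X (\<lambda>ys y. qsem (\<sigma> ys y) \<rho>)) \<circ> inp"
    using qOp.prems
    by (intro map_option_comp_cong qOp.hyps(1)) (auto simp: qGood_qOp_iff ran_def intro: range_eqI[OF sym])
  moreover have "map_option (\<lambda>A. qsemAbs (qPsubstAbs \<sigma> A) \<rho>) \<circ> binp =
      map_option (\<lambda>A. qsemAbs A (\<lambda>ys y. qsem (\<sigma> ys y) \<rho>)) \<circ> binp"
    using qOp.prems
    by (intro map_option_comp_cong qOp.hyps(2)) (auto simp: qGood_qOp_iff ran_def intro: range_eqI[OF sym])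
  ultimately show ?case by (simp add: option.map_comp comp_def)
next
  case (qAbs xs x X)
  define z where "z = pickFresh \<sigma> xs x X"
  define \<sigma>' where "\<sigma>' = \<sigma>(xs := (\<sigma> xs)(x := qVar xs z))"
  have good: "qGood X" "\<And>ys y. qGood (\<sigma> ys y)" "\<And>ys y. qGood (\<sigma>' ys y)"
    using qAbs.prems by (auto simp: \<sigma>'_def)
  \<comment> \<open>z is fresh for every substituted term, so renaming the binder to z does not affect their values\<close>
  have agree: "qsem (\<sigma>' ys y) (updVal \<rho> xs z d) = updVal (\<lambda>ys y. qsem (\<sigma> ys y) \<rho>) xs x d ys y"
    if "(ys, y) \<in> qFV X" for ys y d
  proof (cases "ys = xs \<and> y = x")
    case False
    then have "(xs, z) \<notin> qFV (\<sigma> ys y)"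
      using that pickFresh_notin_qFV[where \<sigma> = \<sigma>, OF inf reg good(1,2)] by (simp add: z_def)
    then have "qsem (\<sigma> ys y) (updVal \<rho> xs z d) = qsem (\<sigma> ys y) \<rho>"
      by (intro qsem_cong(1)) (auto simp: updVal_def)
    with False show ?thesis by (auto simp: \<sigma>'_def updVal_def)
  qed (simp add: \<sigma>'_def updVal_def)
  have "qsem (qPsubst \<sigma>' X) (updVal \<rho> xs z d) =
      qsem X (updVal (\<lambda>ys y. qsem (\<sigma> ys y) \<rho>) xs x d)" for d
    using qAbs.hyps[OF good(1,3)] qsem_cong(1)[OF agree] by simp
  then show ?case by (simp add: Let_def flip: z_def \<sigma>'_def)
qed simp

lemma qsem_rep_abs_trm: "qsem (rep_trm (abs_trm X)) = qsem X"
  by (rule equivclp_invariant[OF Quotient3_rep_abs[OF Quotient3_trm]]) (simp_all add: qsem_alpha(1))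

lemma qsemAbs_rep_abs_tabs: "qsemAbs (rep_tabs (abs_tabs A)) = qsemAbs A"
  by (rule equivclp_invariant[OF Quotient3_rep_abs[OF Quotient3_tabs]]) (simp_all add: qsem_alpha(2))

definition semTrm :: "('index,'bindex,'varsort,'var,'opsym) trm \<Rightarrow> ('varsort \<Rightarrow> 'var \<Rightarrow> 'Dt) \<Rightarrow> 'Dt"
  where "semTrm X = qsem (rep_trm X)"

definition semTabs :: "('index,'bindex,'varsort,'var,'opsym) tabs \<Rightarrow> ('varsort \<Rightarrow> 'var \<Rightarrow> 'Dt) \<Rightarrow> 'Da"
  where "semTabs A = qsemAbs (rep_tabs A)"

lemma semTrm_Var: "semTrm (Var xs x) \<rho> = \<rho> xs x"
  by (simp add: semTrm_def Var_def qsem_rep_abs_trm)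

lemma semTrm_Op:
  "semTrm (Op \<delta> inp binp) \<rho> = op \<delta> (lift (\<lambda>X. semTrm X \<rho>) inp) (lift (\<lambda>A. semTabs A \<rho>) binp)"
  by (simp add: semTrm_def semTabs_def Op_def qsem_rep_abs_trm lift_def option.map_comp comp_def)

lemma semTabs_Abs: "semTabs (Abs xs x X) \<rho> = ab xs (\<lambda>d. semTrm X (updVal \<rho> xs x d))"
  by (simp add: semTrm_def semTabs_def Abs_def qsemAbs_rep_abs_tabs)

lemma semTrm_subst:
  fixes X Y :: "('index,'bindex,'varsort,'var,'opsym) trm"
  assumes "infinite (UNIV :: 'var set)" and "regularCard |UNIV :: 'var set|"
    and "good X" and "good Y"
  shows "semTrm (subst X Y y ys) \<rho> = semTrm X (updVal \<rho> ys y (semTrm Y \<rho>))"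
proof -
  define \<sigma> where "\<sigma> = (\<lambda>zs z. if zs = ys \<and> z = y then rep_trm Y else qVar zs z)"
  have "semTrm (subst X Y y ys) \<rho> = qsem (qPsubst \<sigma> (rep_trm X)) \<rho>"
    by (simp add: semTrm_def subst_def qsem_rep_abs_trm \<sigma>_def)
  also have "\<dots> = qsem (rep_trm X) (\<lambda>zs z. qsem (\<sigma> zs z) \<rho>)"
    using assms(3,4) qsem_qPsubst(1)[OF assms(1,2), of "rep_trm X" \<sigma> \<rho>] by (simp add: \<sigma>_def good_def)
  also have "(\<lambda>zs z. qsem (\<sigma> zs z) \<rho>) = updVal \<rho> ys y (semTrm Y \<rho>)"
    by (auto simp: fun_eq_iff \<sigma>_def updVal_def semTrm_def)
  finally show ?thesis by (simp add: semTrm_def)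
qed

lemma semTrm_cong_fresh:
  assumes "fresh xs x X" and "\<forall>ys y. (ys, y) \<noteq> (xs, x) \<longrightarrow> \<rho> ys y = \<rho>' ys y"
  shows "semTrm X \<rho> = semTrm X \<rho>'"
proof -
  have "(ys, y) \<noteq> (xs, x)" if "(ys, y) \<in> qFV (rep_trm X)" for ys y
    using assms(1) that by (auto simp: fresh_def qFV_def)
  then show ?thesis
    unfolding semTrm_def using assms(2) by (intro qsem_cong(1)) blast
qed

end

theorem theorem3:
  fixes op :: "'opsym \<Rightarrow> ('index, 'Dt) input \<Rightarrow> ('bindex, 'Da) input \<Rightarrow> 'Dt"
    and ab :: "'varsort \<Rightarrow> ('Dt \<Rightarrow> 'Dt) \<Rightarrow> 'Da"
  assumes "infinite (UNIV :: 'var set)"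
    and "regularCard (card_of (UNIV :: 'var set))"
  shows "\<exists>(sem :: ('index,'bindex,'varsort,'var,'opsym) trm \<Rightarrow> ('varsort \<Rightarrow> 'var \<Rightarrow> 'Dt) \<Rightarrow> 'Dt)
           (semAbs :: ('index,'bindex,'varsort,'var,'opsym) tabs \<Rightarrow> ('varsort \<Rightarrow> 'var \<Rightarrow> 'Dt) \<Rightarrow> 'Da).
     \<forall>\<rho> :: 'varsort \<Rightarrow> 'var \<Rightarrow> 'Dt.
       (\<forall>xs x. sem (Var xs x) \<rho> = \<rho> xs x) \<and>
       (\<forall>\<delta> inp binp. goodInp inp \<and> goodBinp binp \<longrightarrow>
          sem (Op \<delta> inp binp) \<rho> = op \<delta> (lift (\<lambda>X. sem X \<rho>) inp) (lift (\<lambda>A. semAbs A \<rho>) binp)) \<and>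
       (\<forall>xs x X. good X \<longrightarrow>
          semAbs (Abs xs x X) \<rho> = ab xs (\<lambda>d. sem X (updVal \<rho> xs x d))) \<and>
       (\<forall>X Y y ys. good X \<and> good Y \<longrightarrow>
          sem (subst X Y y ys) \<rho> = sem X (updVal \<rho> ys y (sem Y \<rho>))) \<and>
       (\<forall>xs x X \<rho>'. good X \<and> fresh xs x X \<and> (\<forall>ys y. (ys, y) \<noteq> (xs, x) \<longrightarrow> \<rho> ys y = \<rho>' ys y) \<longrightarrow>
          sem X \<rho> = sem X \<rho>')"
  using assms
  by (intro exI[of _ "semTrm op ab"] exI[of _ "semTabs op ab"] allI conjI impI)
    (auto simp: semTrm_Var semTrm_Op semTabs_Abs semTrm_subst intro: semTrm_cong_fresh)

end
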